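(* Let $X$ be a Banach space and $(x_n^* )_{n\ge1}$ a sequence in $X^*$ which does not converge to $0$ in the weak topology $\sigma(X^*,X^{**})$. Then there exist a subsequence $(x^*_{n_k})_{k\ge1}$ and $\delta>0$ such that for every finite set $F\subseteq\mathbb N$ there exists $x_F\in X$ with $\|x_F\|_X=1$ and $|\langle x_F,x^*_{n_k}\rangle|\ge\delta$ for all $k\in F$. Moreover, if $X=E$ is a Banach lattice and $x_n^*\ge0$ for all $n$, then $x_F$ may be chosen with $x_F\ge 0$. *)

theory Defs
  imports "HOL-Analysis.Analysis"
begin

class banach_lattice = banach + ordered_real_vector + lattice +
  assumes lattice_norm: "sup x (- x) \<le> sup y (- y) \<Longrightarrow> norm x \<le> norm y"

definition weakly_null :: "(nat \<Rightarrow> ('a::real_normed_vector \<Rightarrow>\<^sub>L real)) \<Rightarrow> bool" where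
  "weakly_null xs \<longleftrightarrow>
     (\<forall>\<phi> :: ('a \<Rightarrow>\<^sub>L real) \<Rightarrow>\<^sub>L real. (\<lambda>n. blinfun_apply \<phi> (xs n)) \<longlonglongrightarrow> 0)"

definition positive_functional :: "('a::{real_normed_vector,order} \<Rightarrow>\<^sub>L real) \<Rightarrow> bool" where
  "positive_functional f \<longleftrightarrow> (\<forall>x. 0 \<le> x \<longrightarrow> 0 \<le> blinfun_apply f x)"

end

theory Submission
  imports Defs
begin

text \<open>A bidual functional \<open>\<phi>\<close> that does not tend to \<open>0\<close> along \<open>(x\<^sup>*\<^sub>n)\<close> can be taken, after a
  change of sign and passing to a subsequence \<open>(y\<^sub>k)\<close>, to satisfy \<open>\<phi>(y\<^sub>k) \<ge> \<epsilon> > 0\<close>. Then every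
  convex combination of the \<open>y\<^sub>k\<close>, \<open>k \<in> F\<close>, has norm at least \<open>\<epsilon> / \<parallel>\<phi>\<parallel>\<close>, so it nearly attains
  this value somewhere on the unit ball. A minimax theorem for finitely many linear functions on
  a convex set, proved by induction on \<open>F\<close> with the two-function case as the step (a separating
  line in \<open>\<real>\<^sup>2\<close>), turns this into a single point of the ball at which all \<open>y\<^sub>k\<close>, \<open>k \<in> F\<close>, are
  at least \<open>\<epsilon> / (2 \<parallel>\<phi>\<parallel>)\<close>; normalizing gives a unit vector. In a Banach lattice one first replaces
  \<open>x\<close> by \<open>|x| = x \<squnion> -x\<close>, which has no larger norm and on which every positive functional is at
  least \<open>|x\<^sup>*(x)|\<close>.\<close>

lemma slope_nonneg_if_bounded_below:
  fixes a b c :: real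
  assumes "\<And>s. 0 \<le> s \<Longrightarrow> b \<le> a * s + c"
  shows "0 \<le> a"
proof (rule ccontr)
  assume "\<not> 0 \<le> a"
  then have "a * ((c - b + 1) / - a) = b - c - 1"
    by (simp add: field_simps)
  moreover have "0 \<le> (c - b + 1) / - a" if "0 \<le> c - b + 1"
    using that \<open>\<not> 0 \<le> a\<close> by (simp add: divide_nonneg_neg)
  ultimately show False
    using assms[of 0] assms[of "(c - b + 1) / - a"] by linarith
qed

lemma convex_disjoint_quadrant_weights:
  fixes A :: "(real \<times> real) set"
  assumes "convex A" "A \<noteq> {}" "A \<inter> {c..} \<times> {c..} = {}"
  obtains t where "0 \<le> t" "t \<le> 1" "\<And>p. p \<in> A \<Longrightarrow> t * fst p + (1 - t) * snd p \<le> c"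
proof -
  have "convex ({c..} \<times> {c..})"
    by (intro convex_Times) (simp_all add: convex_real_interval)
  then obtain a b where "a \<noteq> 0" and below: "\<forall>p\<in>A. inner a p \<le> b"
    and above: "\<forall>p\<in>{c..} \<times> {c..}. b \<le> inner a p"
    using separating_hyperplane_sets[of A "{c..} \<times> {c..}"] assms by auto
  obtain a1 a2 where a: "a = (a1, a2)" by fastforce
  have "b \<le> a1 * s + (a1 + a2) * c" if "0 \<le> s" for s
    using above[rule_format, of "(c + s, c)"] that unfolding a by (simp add: algebra_simps)
  then have "0 \<le> a1"
    by (rule slope_nonneg_if_bounded_below)
  have "b \<le> a2 * s + (a1 + a2) * c" if "0 \<le> s" for s
    using above[rule_format, of "(c, c + s)"] that unfolding a by (simp add: algebra_simps)
  then have "0 \<le> a2"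
    by (rule slope_nonneg_if_bounded_below)
  with \<open>0 \<le> a1\<close> \<open>a \<noteq> 0\<close> have pos: "0 < a1 + a2"
    unfolding a by (auto simp: zero_prod_def)
  define t where "t = a1 / (a1 + a2)"
  have "(a1 + a2) * t = a1"
    using pos unfolding t_def by simp
  have "t * fst p + (1 - t) * snd p \<le> c" if "p \<in> A" for p
  proof -
    have "(a1 + a2) * (t * fst p + (1 - t) * snd p)
        = ((a1 + a2) * t) * fst p + (a1 + a2 - (a1 + a2) * t) * snd p"
      by (simp add: algebra_simps)
    also have "\<dots> = inner a p"
      using \<open>(a1 + a2) * t = a1\<close> unfolding a by (simp add: inner_prod_def)
    also have "\<dots> \<le> b"
      using below that by blast
    also have "\<dots> \<le> (a1 + a2) * c"
      using above[rule_format, of "(c, c)"] unfolding a by (simp add: algebra_simps)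
    finally show ?thesis
      using pos by simp
  qed
  moreover have "0 \<le> t" "t \<le> 1"
    using \<open>0 \<le> a1\<close> \<open>0 \<le> a2\<close> pos unfolding t_def by auto
  ultimately show thesis
    using that by blast
qed

lemma minimax_two_linear:
  fixes C :: "'a::real_vector set" and g h :: "'a \<Rightarrow> real"
  assumes "convex C" "linear g" "linear h" "0 < \<eta>"
    and approx: "\<And>t e. 0 \<le> t \<Longrightarrow> t \<le> 1 \<Longrightarrow> 0 < e \<Longrightarrow> \<exists>x\<in>C. m - e \<le> t * g x + (1 - t) * h x"
  shows "\<exists>x\<in>C. m - \<eta> \<le> g x \<and> m - \<eta> \<le> h x"
proof (rule ccontr)
  assume none: "\<not> ?thesis"
  define A where "A = (\<lambda>x. (g x, h x)) ` C"
  have "linear (\<lambda>x. (g x, h x))"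
    using assms(2,3) by (intro linearI) (simp_all add: linear_add linear_scale)
  then have "convex A"
    unfolding A_def using \<open>convex C\<close> by (rule convex_linear_image)
  moreover have "A \<noteq> {}"
    using approx[of 0 1] unfolding A_def by auto
  moreover have "A \<inter> {m - \<eta>..} \<times> {m - \<eta>..} = {}"
    using none unfolding A_def by auto
  ultimately obtain t where "0 \<le> t" "t \<le> 1"
    and weighted: "\<And>x. x \<in> C \<Longrightarrow> t * g x + (1 - t) * h x \<le> m - \<eta>"
    unfolding A_def by (rule convex_disjoint_quadrant_weights) auto
  with approx[of t "\<eta> / 2"] \<open>0 < \<eta>\<close> show False
    by force
qed

lemma sum_insert_mixture:
  fixes f l :: "'b \<Rightarrow> real"
  assumes "finite F" "a \<notin> F"
  shows "(\<Sum>k\<in>insert a F. (if k = a then 1 - t else t * l k) * f k)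
    = t * (\<Sum>k\<in>F. l k * f k) + (1 - t) * f a"
  using assms by (auto simp: sum_distrib_left mult.assoc intro!: sum.cong)

lemma mixture_weights_approx:
  fixes g :: "'b \<Rightarrow> 'a \<Rightarrow> real"
  assumes "finite F" "a \<notin> F"
    and approx: "\<And>l e. \<forall>k\<in>insert a F. 0 \<le> l k \<Longrightarrow> sum l (insert a F) = 1 \<Longrightarrow> 0 < e \<Longrightarrow>
      \<exists>x\<in>C. m - e \<le> (\<Sum>k\<in>insert a F. l k * g k x)"
    and "\<forall>k\<in>F. 0 \<le> l k" "sum l F = 1 \<or> t = 0" "0 \<le> t" "t \<le> 1" "0 < e"
  shows "\<exists>x\<in>C. m - e \<le> t * (\<Sum>k\<in>F. l k * g k x) + (1 - t) * g a x"
proof -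
  \<comment> \<open>the alternative \<open>t = 0\<close> puts all weight on \<open>a\<close>; it is needed when \<open>F = {}\<close> carries no weights\<close>
  let ?\<mu> = "\<lambda>k. if k = a then 1 - t else t * l k"
  have "sum ?\<mu> (insert a F) = 1"
    using sum_insert_mixture[OF assms(1,2), of t l "\<lambda>_. 1"] assms(4-) by auto
  then show ?thesis
    using approx[of ?\<mu> e] assms(4-) sum_insert_mixture[OF assms(1,2), of t l] by auto
qed

lemma minimax_finite_linear:
  fixes C :: "'a::real_vector set" and g :: "'b \<Rightarrow> 'a \<Rightarrow> real"
  assumes "finite F" "convex C" "C \<noteq> {}" "\<And>k. k \<in> F \<Longrightarrow> linear (g k)" "0 < \<eta>"
    and "\<And>l e. \<forall>k\<in>F. 0 \<le> l k \<Longrightarrow> sum l F = 1 \<Longrightarrow> 0 < e \<Longrightarrow>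
      \<exists>x\<in>C. m - e \<le> (\<Sum>k\<in>F. l k * g k x)"
  shows "\<exists>x\<in>C. \<forall>k\<in>F. m - \<eta> \<le> g k x"
  using assms
proof (induction F arbitrary: C m \<eta> rule: finite_induct)
  case empty
  then show ?case by auto
next
  case (insert a F)
  note mixture = mixture_weights_approx[OF insert.hyps insert.prems(5)]
  define C' where "C' = C \<inter> g a -` {m - \<eta> / 2..}"
  have "linear (g a)"
    using insert.prems(3) by simp
  then have "convex C'"
    unfolding C'_def using insert.prems(1)
    by (intro convex_Int convex_linear_vimage) (auto simp: convex_real_interval)
  have "C' \<noteq> {}"
    using mixture[where l = "\<lambda>_. 0" and t = 0 and e = "\<eta> / 2"] insert.prems(4)
    unfolding C'_def by auto
  have approx': "\<exists>x\<in>C'. m - \<eta> / 2 - e \<le> (\<Sum>k\<in>F. l k * g k x)"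
    if "\<forall>k\<in>F. 0 \<le> l k" "sum l F = 1" "0 < e" for l e
  proof -
    have "linear (\<lambda>x. \<Sum>k\<in>F. l k * g k x)"
      using insert.prems(3) linear_compose[OF _ linear_times]
      by (intro linear_compose_sum) (auto simp: o_def)
    then have "\<exists>x\<in>C. m - \<eta> / 2 \<le> (\<Sum>k\<in>F. l k * g k x) \<and> m - \<eta> / 2 \<le> g a x"
      using \<open>linear (g a)\<close> insert.prems(1,4) mixture[where l = l] that
      by (intro minimax_two_linear) auto
    then show ?thesis
      using \<open>0 < e\<close> unfolding C'_def by force
  qed
  have "0 < \<eta> / 2"
    using insert.prems(4) by simp
  then obtain x where "x \<in> C'" "\<forall>k\<in>F. m - \<eta> / 2 - \<eta> / 2 \<le> g k x"
    using insert.IH[OF \<open>convex C'\<close> \<open>C' \<noteq> {}\<close> _ _ approx'] insert.prems(3) by blast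
  moreover have "m - \<eta> \<le> g a x"
    using \<open>x \<in> C'\<close> \<open>0 < \<eta> / 2\<close> unfolding C'_def by simp
  ultimately show ?case
    unfolding C'_def by auto
qed

lemma exists_unit_ball_near_norm_blinfun:
  fixes G :: "'a::real_normed_vector \<Rightarrow>\<^sub>L real"
  assumes "0 < e"
  shows "\<exists>x. norm x \<le> 1 \<and> norm G - e < blinfun_apply G x"
proof (rule ccontr)
  assume "\<not> ?thesis"
  then have le: "blinfun_apply G v \<le> norm G - e" if "norm v \<le> 1" for v
    using that by (auto simp: not_less)
  have small: "\<bar>blinfun_apply G u\<bar> \<le> norm G - e" if "norm u \<le> 1" for u
    using le[of u] le[of "- u"] that by (simp add: abs_le_iff blinfun.minus_right)
  have "norm (blinfun_apply G x) \<le> (norm G - e) * norm x" for x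
  proof -
    have "blinfun_apply G x = norm x * blinfun_apply G (sgn x)"
      by (cases "x = 0") (simp_all add: sgn_div_norm blinfun.scaleR_right)
    then show ?thesis
      using small[of "sgn x"] by (simp add: abs_mult norm_sgn mult_left_mono mult.commute)
  qed
  then have "norm G \<le> norm G - e"
    using small[of 0] by (intro norm_blinfun_bound) auto
  with \<open>0 < e\<close> show False
    by simp
qed

lemma not_weakly_null_bidual_bounded_below:
  assumes "\<not> weakly_null xs"
  obtains \<phi> :: "('a::real_normed_vector \<Rightarrow>\<^sub>L real) \<Rightarrow>\<^sub>L real" and \<epsilon> and r :: "nat \<Rightarrow> nat"
  where "0 < \<epsilon>" "strict_mono r" "\<forall>k. \<epsilon> \<le> blinfun_apply \<phi> (xs (r k))"
proof -
  obtain \<psi> :: "('a \<Rightarrow>\<^sub>L real) \<Rightarrow>\<^sub>L real" where "\<not> (\<lambda>n. blinfun_apply \<psi> (xs n)) \<longlonglongrightarrow> 0"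
    using assms unfolding weakly_null_def by blast
  then obtain \<epsilon> where "0 < \<epsilon>" and often: "\<forall>N. \<exists>n\<ge>N. \<epsilon> \<le> \<bar>blinfun_apply \<psi> (xs n)\<bar>"
    unfolding LIMSEQ_iff by (auto simp: not_less)
  have "infinite {n. \<epsilon> \<le> \<bar>blinfun_apply \<psi> (xs n)\<bar>}"
    using often by (simp add: infinite_nat_iff_unbounded_le)
  moreover have "{n. \<epsilon> \<le> \<bar>blinfun_apply \<psi> (xs n)\<bar>}
      \<subseteq> {n. \<epsilon> \<le> blinfun_apply \<psi> (xs n)} \<union> {n. \<epsilon> \<le> blinfun_apply (- \<psi>) (xs n)}"
    by (auto simp: blinfun.minus_left)
  ultimately have "infinite ({n. \<epsilon> \<le> blinfun_apply \<psi> (xs n)}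
      \<union> {n. \<epsilon> \<le> blinfun_apply (- \<psi>) (xs n)})"
    by (rule infinite_super[rotated])
  then have "infinite {n. \<epsilon> \<le> blinfun_apply \<psi> (xs n)}
      \<or> infinite {n. \<epsilon> \<le> blinfun_apply (- \<psi>) (xs n)}"
    by simp
  then obtain \<phi> where "infinite {n. \<epsilon> \<le> blinfun_apply \<phi> (xs n)}"
    by (elim disjE) (rule that)
  then obtain r :: "nat \<Rightarrow> nat" where "strict_mono r" "\<forall>k. r k \<in> {n. \<epsilon> \<le> blinfun_apply \<phi> (xs n)}"
    using infinite_enumerate by blast
  with \<open>0 < \<epsilon>\<close> show thesis
    using that by simp
qed

lemma unit_ball_point_large_on_finite:
  fixes f :: "'b \<Rightarrow> ('a::real_normed_vector \<Rightarrow>\<^sub>L real)"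
    and \<phi> :: "('a \<Rightarrow>\<^sub>L real) \<Rightarrow>\<^sub>L real"
  assumes "finite F" "\<And>k. k \<in> F \<Longrightarrow> \<epsilon> \<le> blinfun_apply \<phi> (f k)" "0 < \<eta>"
  shows "\<exists>x. norm x \<le> 1 \<and> (\<forall>k\<in>F. \<epsilon> / norm \<phi> - \<eta> \<le> blinfun_apply (f k) x)"
proof -
  have approx: "\<exists>x\<in>cball 0 1. \<epsilon> / norm \<phi> - e \<le> (\<Sum>k\<in>F. l k * blinfun_apply (f k) x)"
    if l: "\<forall>k\<in>F. 0 \<le> l k" "sum l F = 1" and "0 < e" for l e
  proof -
    define G where "G = (\<Sum>k\<in>F. l k *\<^sub>R f k)"
    have G_apply: "blinfun_apply G x = (\<Sum>k\<in>F. l k * blinfun_apply (f k) x)" for x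
      unfolding G_def by (simp add: blinfun.sum_left blinfun.scaleR_left)
    have "\<epsilon> = (\<Sum>k\<in>F. l k * \<epsilon>)"
      using l by (simp flip: sum_distrib_right)
    also have "\<dots> \<le> (\<Sum>k\<in>F. l k * blinfun_apply \<phi> (f k))"
      using l assms(2) by (intro sum_mono mult_left_mono) auto
    also have "\<dots> = blinfun_apply \<phi> G"
      unfolding G_def by (simp add: blinfun.sum_right blinfun.scaleR_right)
    also have "\<dots> \<le> norm \<phi> * norm G"
      using norm_blinfun[of \<phi> G] by simp
    finally have "\<epsilon> / norm \<phi> \<le> norm G"
      \<comment> \<open>also when \<open>\<phi> = 0\<close>, since then \<open>\<epsilon> / norm \<phi> = 0\<close>\<close>
      by (simp add: divide_le_eq mult.commute)
    moreover obtain x where "norm x \<le> 1" "norm G - e < blinfun_apply G x"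
      using exists_unit_ball_near_norm_blinfun \<open>0 < e\<close> by blast
    ultimately show ?thesis
      using G_apply by (intro bexI[of _ x]) auto
  qed
  have "\<exists>x\<in>cball 0 1. \<forall>k\<in>F. \<epsilon> / norm \<phi> - \<eta> \<le> blinfun_apply (f k) x"
  proof (rule minimax_finite_linear)
    show "linear (blinfun_apply (f k))" for k
      by (rule bounded_linear.linear[OF blinfun.bounded_linear_right])
  qed (use assms approx in auto)
  then show ?thesis
    by auto
qed

lemma not_weakly_null_large_on_finite:
  assumes "\<not> weakly_null xs"
  obtains r :: "nat \<Rightarrow> nat" and \<delta> :: real where "strict_mono r" "0 < \<delta>"
    "\<forall>F. finite F \<longrightarrow> (\<exists>x. norm x \<le> 1 \<and> (\<forall>k\<in>F. \<delta> \<le> blinfun_apply (xs (r k)) x))"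
proof -
  obtain \<phi> and \<epsilon> :: real and r :: "nat \<Rightarrow> nat"
    where "0 < \<epsilon>" "strict_mono r" and large: "\<forall>k. \<epsilon> \<le> blinfun_apply \<phi> (xs (r k))"
    by (rule not_weakly_null_bidual_bounded_below[OF assms])
  have "\<phi> \<noteq> 0"
    using large[rule_format, of 0] \<open>0 < \<epsilon>\<close> by auto
  define \<delta> where "\<delta> = \<epsilon> / norm \<phi> / 2"
  have "0 < \<delta>"
    unfolding \<delta>_def using \<open>0 < \<epsilon>\<close> \<open>\<phi> \<noteq> 0\<close> by simp
  moreover have "\<epsilon> / norm \<phi> - \<delta> = \<delta>"
    unfolding \<delta>_def by simp
  ultimately have "\<exists>x. norm x \<le> 1 \<and> (\<forall>k\<in>F. \<delta> \<le> blinfun_apply (xs (r k)) x)"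
    if "finite F" for F
    using unit_ball_point_large_on_finite[where f = "\<lambda>k. xs (r k)" and \<epsilon> = \<epsilon> and \<phi> = \<phi>
        and \<eta> = \<delta>, OF that] large
    by simp
  with \<open>strict_mono r\<close> \<open>0 < \<delta>\<close> show thesis
    using that by blast
qed

lemma blinfun_le_apply_sgn:
  fixes f :: "'a::real_normed_vector \<Rightarrow>\<^sub>L real"
  assumes "norm x \<le> 1" "0 \<le> blinfun_apply f x"
  shows "blinfun_apply f x \<le> blinfun_apply f (sgn x)"
proof (cases "x = 0")
  case False
  then have "blinfun_apply f (sgn x) = blinfun_apply f x / norm x"
    by (simp add: sgn_div_norm blinfun.scaleR_right divide_inverse mult.commute)
  with assms False show ?thesis
    by (simp add: le_divide_eq mult_left_le)
qed simp

lemma norm_sgn_and_large_on: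
  fixes f :: "'b \<Rightarrow> ('a::real_normed_vector \<Rightarrow>\<^sub>L real)"
  assumes "norm x \<le> 1" "0 < \<delta>" "\<forall>k\<in>insert k\<^sub>0 F. \<delta> \<le> blinfun_apply (f k) x"
  shows "norm (sgn x) = 1 \<and> (\<forall>k\<in>F. \<delta> \<le> blinfun_apply (f k) (sgn x))"
proof -
  have "x \<noteq> 0"
    using assms(2,3) by auto
  moreover have "blinfun_apply (f k) x \<le> blinfun_apply (f k) (sgn x)" if "k \<in> F" for k
    using assms that by (intro blinfun_le_apply_sgn) force+
  ultimately show ?thesis
    using assms(3) by (force simp: norm_sgn)
qed

lemma not_weakly_null_unit_witnesses:
  fixes xs :: "nat \<Rightarrow> ('a::real_normed_vector \<Rightarrow>\<^sub>L real)"
  assumes "\<not> weakly_null xs"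
  shows "\<exists>(r::nat \<Rightarrow> nat) \<delta>::real. strict_mono r \<and> \<delta> > 0 \<and>
    (\<forall>F::nat set. finite F \<longrightarrow>
      (\<exists>x. norm x = 1 \<and> (\<forall>k\<in>F. \<bar>blinfun_apply (xs (r k)) x\<bar> \<ge> \<delta>)))"
proof -
  obtain r :: "nat \<Rightarrow> nat" and \<delta> where "strict_mono r" "0 < \<delta>" and large:
    "\<forall>F. finite F \<longrightarrow> (\<exists>x. norm x \<le> 1 \<and> (\<forall>k\<in>F. \<delta> \<le> blinfun_apply (xs (r k)) x))"
    using not_weakly_null_large_on_finite[OF assms] by blast
  have "\<exists>x. norm x = 1 \<and> (\<forall>k\<in>F. \<bar>blinfun_apply (xs (r k)) x\<bar> \<ge> \<delta>)" if "finite F" for F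
  proof -
    obtain x where "norm x \<le> 1" "\<forall>k\<in>insert 0 F. \<delta> \<le> blinfun_apply (xs (r k)) x"
      using large \<open>finite F\<close> by blast
    then have "norm (sgn x) = 1 \<and> (\<forall>k\<in>F. \<delta> \<le> blinfun_apply (xs (r k)) (sgn x))"
      using norm_sgn_and_large_on[where f = "\<lambda>k. xs (r k)"] \<open>0 < \<delta>\<close> by blast
    then show ?thesis
      by (intro exI[of _ "sgn x"]) (auto intro: order_trans[OF _ abs_ge_self])
  qed
  with \<open>strict_mono r\<close> \<open>0 < \<delta>\<close> show ?thesis
    by blast
qed

lemma sup_uminus_nonneg:
  fixes x :: "'a::{ordered_real_vector, lattice}"
  shows "0 \<le> sup x (- x)"
proof -
  have "0 = x + - x"
    by simp
  also have "\<dots> \<le> sup x (- x) + sup x (- x)"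
    by (intro add_mono sup_ge1 sup_ge2)
  finally have "0 \<le> (1 / 2 :: real) *\<^sub>R (sup x (- x) + sup x (- x))"
    by (intro scaleR_nonneg_nonneg) simp_all
  also have "\<dots> = sup x (- x)"
    by (simp only: scaleR_2[symmetric] scaleR_scaleR) simp
  finally show ?thesis .
qed

lemma norm_sup_uminus_le:
  fixes x :: "'a::banach_lattice"
  shows "norm (sup x (- x)) \<le> norm x"
proof (rule lattice_norm)
  have "- sup x (- x) \<le> 0"
    using sup_uminus_nonneg[of x] by (simp only: neg_le_0_iff_le)
  also have "0 \<le> sup x (- x)"
    by (rule sup_uminus_nonneg)
  finally show "sup (sup x (- x)) (- sup x (- x)) \<le> sup x (- x)"
    by (simp add: sup_absorb1)
qed

lemma positive_functional_abs_le:
  fixes f :: "'a::{real_normed_vector, ordered_real_vector, lattice} \<Rightarrow>\<^sub>L real"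
  assumes "positive_functional f"
  shows "\<bar>blinfun_apply f x\<bar> \<le> blinfun_apply f (sup x (- x))"
proof -
  have "0 \<le> sup x (- x) - x"
    by (simp only: diff_ge_0_iff_ge sup_ge1)
  moreover have "0 \<le> sup x (- x) - - x"
    by (simp only: diff_ge_0_iff_ge sup_ge2)
  ultimately have "0 \<le> blinfun_apply f (sup x (- x) - x)" "0 \<le> blinfun_apply f (sup x (- x) - - x)"
    using assms unfolding positive_functional_def by blast+
  then show ?thesis
    by (simp add: blinfun.diff_right blinfun.minus_right blinfun.add_right abs_le_iff)
qed

lemma not_weakly_null_positive_unit_witnesses:
  fixes xs :: "nat \<Rightarrow> ('a::banach_lattice \<Rightarrow>\<^sub>L real)"
  assumes "\<not> weakly_null xs" "\<forall>n. positive_functional (xs n)"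
  shows "\<exists>(r::nat \<Rightarrow> nat) \<delta>::real. strict_mono r \<and> \<delta> > 0 \<and>
    (\<forall>F::nat set. finite F \<longrightarrow>
      (\<exists>x. norm x = 1 \<and> 0 \<le> x \<and> (\<forall>k\<in>F. \<bar>blinfun_apply (xs (r k)) x\<bar> \<ge> \<delta>)))"
proof -
  obtain r :: "nat \<Rightarrow> nat" and \<delta> where "strict_mono r" "0 < \<delta>" and large:
    "\<forall>F. finite F \<longrightarrow> (\<exists>x. norm x \<le> 1 \<and> (\<forall>k\<in>F. \<delta> \<le> blinfun_apply (xs (r k)) x))"
    using not_weakly_null_large_on_finite[OF assms(1)] by blast
  have "\<exists>x. norm x = 1 \<and> 0 \<le> x \<and> (\<forall>k\<in>F. \<bar>blinfun_apply (xs (r k)) x\<bar> \<ge> \<delta>)" if "finite F" for F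
  proof -
    obtain x where "norm x \<le> 1" and x: "\<forall>k\<in>insert 0 F. \<delta> \<le> blinfun_apply (xs (r k)) x"
      using large \<open>finite F\<close> by blast
    define a where "a = sup x (- x)"
    have "norm a \<le> 1"
      unfolding a_def using norm_sup_uminus_le[of x] \<open>norm x \<le> 1\<close> by linarith
    moreover have "\<delta> \<le> blinfun_apply (xs (r k)) a" if "k \<in> insert 0 F" for k
    proof -
      have "\<delta> \<le> blinfun_apply (xs (r k)) x"
        using x that by blast
      also have "\<dots> \<le> \<bar>blinfun_apply (xs (r k)) x\<bar>"
        by (rule abs_ge_self)
      also have "\<dots> \<le> blinfun_apply (xs (r k)) a"
        unfolding a_def using assms(2) by (intro positive_functional_abs_le) blast
      finally show ?thesis .
    qed
    ultimately have "norm (sgn a) = 1 \<and> (\<forall>k\<in>F. \<delta> \<le> blinfun_apply (xs (r k)) (sgn a))"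
      using norm_sgn_and_large_on[where f = "\<lambda>k. xs (r k)"] \<open>0 < \<delta>\<close> by blast
    moreover have "0 \<le> sgn a"
      unfolding sgn_div_norm a_def using sup_uminus_nonneg[of x] by (intro scaleR_nonneg_nonneg) auto
    ultimately show ?thesis
      by (intro exI[of _ "sgn a"]) (auto intro: order_trans[OF _ abs_ge_self])
  qed
  with \<open>strict_mono r\<close> \<open>0 < \<delta>\<close> show ?thesis
    by blast
qed

theorem lemma4p1:
  fixes xs :: "nat \<Rightarrow> ('a::banach \<Rightarrow>\<^sub>L real)"
    and ys :: "nat \<Rightarrow> ('e::banach_lattice \<Rightarrow>\<^sub>L real)"
  shows "(\<not> weakly_null xs \<longrightarrow>
            (\<exists>(r::nat \<Rightarrow> nat) \<delta>::real. strict_mono r \<and> \<delta> > 0 \<and>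
               (\<forall>F::nat set. finite F \<longrightarrow>
                  (\<exists>x. norm x = 1 \<and> (\<forall>k\<in>F. \<bar>blinfun_apply (xs (r k)) x\<bar> \<ge> \<delta>)))))
       \<and> ((\<not> weakly_null ys \<and> (\<forall>n. positive_functional (ys n))) \<longrightarrow>
            (\<exists>(r::nat \<Rightarrow> nat) \<delta>::real. strict_mono r \<and> \<delta> > 0 \<and>
               (\<forall>F::nat set. finite F \<longrightarrow>
                  (\<exists>x. norm x = 1 \<and> 0 \<le> x \<and>
                       (\<forall>k\<in>F. \<bar>blinfun_apply (ys (r k)) x\<bar> \<ge> \<delta>)))))"
  using not_weakly_null_unit_witnesses[of xs] not_weakly_null_positive_unit_witnesses[of ys]
  by blast

end
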